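(* For any finite symmetric two-player game $(X,\pi)$ with relative payoff function $\Delta$, imitation is subject to a money pump if and only if there exists an imitation cycle.
   Context: A symmetric two-player game $(X,\pi)$ has common action set $X$ and bounded payoff $\pi:X\times X\to\mathbb{R}$ ($\pi(x,y)$ = payoff of the player choosing $x$ against $y$). Relative payoff: $\Delta(x,y)=\pi(x,y)-\pi(y,x)$. Imitate-the-best: given initial $y_0\in X$ and any opponent sequence $(x_t)_{t\ge0}$, $y_t=x_{t-1}$ if $\Delta(x_{t-1},y_{t-1})>0$ and $y_t=y_{t-1}$ otherwise. Imitation is not subject to a money pump if there is $M\in\mathbb{R}_+$ such that for every $y_0\in X$ and every sequence $(x_t)$, $\limsup_{T\to\infty}\sum_{t=0}^T\Delta(x_t,y_t)\le M$; otherwise it is subject to a money pump. A cycle is a finite sequence of profiles $(x_0,y_0),\dots,(x_n,y_n)$ in $X\times X$, not all equal, with $(x_0,y_0)=(x_n,y_n)$. It is an imitation cycle if for all consecutive profiles $(x_t,y_t),(x_{t+1},y_{t+1})$ on it, $\Delta(x_t,y_t)>0$ and $y_{t+1}=x_t$. *)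

theory Defs
  imports "HOL-Analysis.Analysis"
begin

definition rel_payoff :: "('a \<Rightarrow> 'a \<Rightarrow> real) \<Rightarrow> 'a \<Rightarrow> 'a \<Rightarrow> real" where
  "rel_payoff \<pi> x y = \<pi> x y - \<pi> y x"

fun imitate :: "('a \<Rightarrow> 'a \<Rightarrow> real) \<Rightarrow> 'a \<Rightarrow> (nat \<Rightarrow> 'a) \<Rightarrow> nat \<Rightarrow> 'a" where
  "imitate \<pi> y0 xs 0 = y0"
| "imitate \<pi> y0 xs (Suc t) =
     (if rel_payoff \<pi> (xs t) (imitate \<pi> y0 xs t) > 0 then xs t else imitate \<pi> y0 xs t)"

definition no_money_pump :: "('a \<Rightarrow> 'a \<Rightarrow> real) \<Rightarrow> bool" where
  "no_money_pump \<pi> \<longleftrightarrow> (\<exists>M::real. M \<ge> 0 \<and> (\<forall>y0 xs.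
      limsup (\<lambda>T. ereal (\<Sum>t\<le>T. rel_payoff \<pi> (xs t) (imitate \<pi> y0 xs t))) \<le> ereal M))"

definition money_pump :: "('a \<Rightarrow> 'a \<Rightarrow> real) \<Rightarrow> bool" where
  "money_pump \<pi> \<longleftrightarrow> \<not> no_money_pump \<pi>"

definition is_cycle :: "('a \<times> 'a) list \<Rightarrow> bool" where
  "is_cycle p \<longleftrightarrow> length p \<ge> 2 \<and> hd p = last p \<and> (\<exists>q\<in>set p. q \<noteq> hd p)"

definition imitation_cycle :: "('a \<Rightarrow> 'a \<Rightarrow> real) \<Rightarrow> ('a \<times> 'a) list \<Rightarrow> bool" where
  "imitation_cycle \<pi> p \<longleftrightarrow> is_cycle p \<and>
     (\<forall>t. Suc t < length p \<longrightarrow>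
        rel_payoff \<pi> (fst (p ! t)) (snd (p ! t)) > 0 \<and> snd (p ! Suc t) = fst (p ! t))"

end

theory Submission
  imports Defs
begin

text \<open>Along an imitation cycle the imitator can be led around forever, each round earning the
  opponent a fixed positive amount, so the relative payoffs accumulate without bound.
  Conversely, look at the times t at which the imitator is about to switch, i.e.
  \<open>\<Delta>(x\<^sub>t, y\<^sub>t) > 0\<close>. Between two consecutive such times t < s the imitator keeps
  \<open>y\<^sub>s = x\<^sub>t\<close>, so the profiles at switching times form a walk of imitation steps. If a
  profile recurred at two switching times, this walk would close up to an imitation cycle.
  Hence without imitation cycles each of the finitely many profiles is a switching profile at
  most once, and only at switching times can the opponent gain; the total gain is therefore
  bounded by the number of profiles times the largest relative payoff.\<close>

lemma imitate_along_cycle: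
  assumes "imitation_cycle \<pi> p"
  defines "n \<equiv> length p - 1"
  shows "imitate \<pi> (snd (p ! 0)) (\<lambda>t. fst (p ! (t mod n))) t = snd (p ! (t mod n))"
proof -
  have n: "length p = Suc n" "n \<noteq> 0" and "hd p = last p"
    using assms unfolding imitation_cycle_def is_cycle_def n_def by auto
  moreover from n have "p \<noteq> []" by auto
  ultimately have closed: "p ! n = p ! 0"
    by (metis diff_Suc_1 hd_conv_nth last_conv_nth)
  have step: "rel_payoff \<pi> (fst (p ! i)) (snd (p ! i)) > 0 \<and> snd (p ! Suc i) = fst (p ! i)"
    if "i < n" for i
    using assms that n(1) unfolding imitation_cycle_def by (metis Suc_mono)
  show ?thesis
  proof (induction t)
    case 0
    show ?case by simp
  next
    case (Suc t)
    have "t mod n < n" using n(2) by simp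
    then have "imitate \<pi> (snd (p ! 0)) (\<lambda>t. fst (p ! (t mod n))) (Suc t) = fst (p ! (t mod n))"
      using Suc.IH step by simp
    also have "\<dots> = snd (p ! (Suc t mod n))"
      using step[OF \<open>t mod n < n\<close>] closed by (cases "Suc (t mod n) = n") (simp_all add: mod_Suc)
    finally show ?case .
  qed
qed

lemma limsup_partial_sums_eq_PInfty:
  fixes f :: "nat \<Rightarrow> real"
  assumes "c > 0" "\<And>t. c \<le> f t"
  shows "limsup (\<lambda>T. ereal (\<Sum>t\<le>T. f t)) = \<infinity>"
proof -
  have "filterlim (\<lambda>T. c * real T) at_top sequentially"
    using assms(1) filterlim_real_sequentially
    by (intro filterlim_tendsto_pos_mult_at_top) auto
  moreover have bound: "c * real T \<le> (\<Sum>t\<le>T. f t)" for T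
  proof -
    have "c * real T \<le> (\<Sum>t\<le>T. c)"
      using assms(1) by simp
    also have "\<dots> \<le> (\<Sum>t\<le>T. f t)"
      using assms(2) by (rule sum_mono)
    finally show ?thesis .
  qed
  ultimately have "filterlim (\<lambda>T. \<Sum>t\<le>T. f t) at_top sequentially"
    by (auto intro: filterlim_at_top_mono always_eventually)
  then show ?thesis
    by (intro lim_imp_Limsup) (simp_all add: tendsto_PInfty_eq_at_top)
qed

lemma money_pump_if_imitation_cycle:
  assumes cycle: "imitation_cycle \<pi> p"
  shows "money_pump \<pi>"
proof -
  define n where "n = length p - 1"
  define xs where "xs = (\<lambda>t. fst (p ! (t mod n)))"
  define gain where "gain = (\<lambda>i. rel_payoff \<pi> (fst (p ! i)) (snd (p ! i)))"
  define c where "c = Min (gain ` {..<n})"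
  have "n \<noteq> 0" "length p = Suc n"
    using cycle unfolding imitation_cycle_def is_cycle_def n_def by auto
  have gain_pos: "gain i > 0" if "i < n" for i
    using cycle that \<open>length p = Suc n\<close> unfolding imitation_cycle_def gain_def by (metis Suc_mono)
  have "c > 0"
    unfolding c_def using \<open>n \<noteq> 0\<close> gain_pos by (subst Min_gr_iff) auto
  moreover have "c \<le> rel_payoff \<pi> (xs t) (imitate \<pi> (snd (p ! 0)) xs t)" for t
  proof -
    have "t mod n < n" using \<open>n \<noteq> 0\<close> by simp
    then have "c \<le> gain (t mod n)"
      unfolding c_def by (intro Min_le) auto
    then show ?thesis
      using imitate_along_cycle[OF cycle] unfolding xs_def gain_def n_def by simp
  qed
  ultimately have pump:
    "limsup (\<lambda>T. ereal (\<Sum>t\<le>T. rel_payoff \<pi> (xs t) (imitate \<pi> (snd (p ! 0)) xs t))) = \<infinity>"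
    by (rule limsup_partial_sums_eq_PInfty)
  show ?thesis
    unfolding money_pump_def no_money_pump_def
  proof
    assume "\<exists>M\<ge>0. \<forall>y0 xs.
      limsup (\<lambda>T. ereal (\<Sum>t\<le>T. rel_payoff \<pi> (xs t) (imitate \<pi> y0 xs t))) \<le> ereal M"
    then obtain M where
      "limsup (\<lambda>T. ereal (\<Sum>t\<le>T. rel_payoff \<pi> (xs t) (imitate \<pi> (snd (p ! 0)) xs t))) \<le> ereal M"
      by blast
    with pump show False by simp
  qed
qed

lemma tranclp_imp_chain:
  assumes "R\<^sup>+\<^sup>+ a b"
  obtains p where "length p \<ge> 2" "hd p = a" "last p = b"
    "\<And>i. Suc i < length p \<Longrightarrow> R (p ! i) (p ! Suc i)"
  using assms
proof (induction arbitrary: thesis rule: tranclp_induct)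
  case (base b)
  show ?case by (rule base.prems[of "[a, b]"]) (use base.hyps in \<open>auto simp: less_Suc_eq\<close>)
next
  case (step b c)
  obtain p where p: "length p \<ge> 2" "hd p = a" "last p = b"
    and chain: "\<And>i. Suc i < length p \<Longrightarrow> R (p ! i) (p ! Suc i)"
    using step.IH by blast
  have "p \<noteq> []" using p(1) by auto
  have "R ((p @ [c]) ! i) ((p @ [c]) ! Suc i)" if "Suc i < length (p @ [c])" for i
  proof (cases "Suc i < length p")
    case True
    then show ?thesis using chain by (simp add: nth_append)
  next
    case False
    then have "Suc i = length p" using that by simp
    then have "p ! i = b" using p(3) \<open>p \<noteq> []\<close> by (metis diff_Suc_1 last_conv_nth)
    then show ?thesis using \<open>Suc i = length p\<close> step.hyps(2) by (simp add: nth_append)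
  qed
  with \<open>p \<noteq> []\<close> show ?case using p by (intro step.prems[of "p @ [c]"]) auto
qed

definition imitation_step :: "('a \<Rightarrow> 'a \<Rightarrow> real) \<Rightarrow> 'a \<times> 'a \<Rightarrow> 'a \<times> 'a \<Rightarrow> bool" where
  "imitation_step \<pi> a b \<longleftrightarrow> rel_payoff \<pi> (fst a) (snd a) > 0 \<and> snd b = fst a"

lemma imitation_cycle_if_tranclp_imitation_step:
  assumes "(imitation_step \<pi>)\<^sup>+\<^sup>+ a a"
  shows "\<exists>p. imitation_cycle \<pi> p"
proof -
  obtain p where p: "length p \<ge> 2" "hd p = a" "last p = a"
    and chain: "\<And>i. Suc i < length p \<Longrightarrow> imitation_step \<pi> (p ! i) (p ! Suc i)"
    using tranclp_imp_chain[OF assms] by blast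
  have "p ! 1 \<noteq> p ! 0"
    using chain[of 0] p(1) by (auto simp: imitation_step_def rel_payoff_def)
  moreover have "p \<noteq> []" using p(1) by auto
  then have "p ! 0 = hd p" "p ! 1 \<in> set p" using p(1) by (auto simp: hd_conv_nth)
  ultimately have "is_cycle p" using p unfolding is_cycle_def by metis
  with chain have "imitation_cycle \<pi> p"
    unfolding imitation_cycle_def imitation_step_def by blast
  then show ?thesis by blast
qed

lemma imitate_eq_earlier_switch:
  assumes "rel_payoff \<pi> (xs t) (imitate \<pi> y0 xs t) > 0" "t < s"
  shows "\<exists>u. t \<le> u \<and> u < s \<and> rel_payoff \<pi> (xs u) (imitate \<pi> y0 xs u) > 0 \<and>
           imitate \<pi> y0 xs s = xs u \<and>
           (imitation_step \<pi>)\<^sup>*\<^sup>* (xs t, imitate \<pi> y0 xs t) (xs u, imitate \<pi> y0 xs u)"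
proof -
  from \<open>t < s\<close> have "Suc t \<le> s" by simp
  then show ?thesis
  proof (induction s rule: nat_induct_at_least)
    case base
    show ?case using assms(1) by (intro exI[of _ t]) auto
  next
    case (Suc s)
    then obtain u where u: "t \<le> u" "u < s" "rel_payoff \<pi> (xs u) (imitate \<pi> y0 xs u) > 0"
        "imitate \<pi> y0 xs s = xs u"
        "(imitation_step \<pi>)\<^sup>*\<^sup>* (xs t, imitate \<pi> y0 xs t) (xs u, imitate \<pi> y0 xs u)"
      by auto
    show ?case
    proof (cases "rel_payoff \<pi> (xs s) (imitate \<pi> y0 xs s) > 0")
      case True
      then have "imitation_step \<pi> (xs u, imitate \<pi> y0 xs u) (xs s, imitate \<pi> y0 xs s)"
        using u(3,4) by (simp add: imitation_step_def)
      with u True show ?thesis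
        by (intro exI[of _ s]) (auto intro: rtranclp.rtrancl_into_rtrancl)
    next
      case False
      with u show ?thesis by (intro exI[of _ u]) auto
    qed
  qed
qed

lemma tranclp_imitation_step_from_switch:
  assumes "rel_payoff \<pi> (xs t) (imitate \<pi> y0 xs t) > 0" "t < s"
  shows "(imitation_step \<pi>)\<^sup>+\<^sup>+ (xs t, imitate \<pi> y0 xs t) (xs s, imitate \<pi> y0 xs s)"
proof -
  obtain u where u: "rel_payoff \<pi> (xs u) (imitate \<pi> y0 xs u) > 0" "imitate \<pi> y0 xs s = xs u"
      "(imitation_step \<pi>)\<^sup>*\<^sup>* (xs t, imitate \<pi> y0 xs t) (xs u, imitate \<pi> y0 xs u)"
    using imitate_eq_earlier_switch[OF assms] by blast
  have "imitation_step \<pi> (xs u, imitate \<pi> y0 xs u) (xs s, imitate \<pi> y0 xs s)"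
    using u(1,2) by (simp add: imitation_step_def)
  with u(3) show ?thesis by (rule rtranclp_into_tranclp1)
qed

lemma inj_on_switch_profiles:
  assumes "\<nexists>p. imitation_cycle \<pi> p"
  shows "inj_on (\<lambda>t. (xs t, imitate \<pi> y0 xs t)) {t. rel_payoff \<pi> (xs t) (imitate \<pi> y0 xs t) > 0}"
proof (rule inj_onI, rule ccontr)
  have acyclic: "\<not> (imitation_step \<pi>)\<^sup>+\<^sup>+ a a" for a
    using imitation_cycle_if_tranclp_imitation_step assms by blast
  fix t s
  assume switches: "t \<in> {t. rel_payoff \<pi> (xs t) (imitate \<pi> y0 xs t) > 0}"
    "s \<in> {t. rel_payoff \<pi> (xs t) (imitate \<pi> y0 xs t) > 0}"
    and eq: "(xs t, imitate \<pi> y0 xs t) = (xs s, imitate \<pi> y0 xs s)" and "t \<noteq> s"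
  consider
      "(imitation_step \<pi>)\<^sup>+\<^sup>+ (xs t, imitate \<pi> y0 xs t) (xs s, imitate \<pi> y0 xs s)"
    | "(imitation_step \<pi>)\<^sup>+\<^sup>+ (xs s, imitate \<pi> y0 xs s) (xs t, imitate \<pi> y0 xs t)"
    using switches \<open>t \<noteq> s\<close> tranclp_imitation_step_from_switch[of \<pi> xs t y0 s]
      tranclp_imitation_step_from_switch[of \<pi> xs s y0 t]
    by (auto simp: neq_iff)
  then show False
    using acyclic eq by cases auto
qed

lemma sum_le_card_positive_mult_bound:
  fixes f :: "'b \<Rightarrow> real"
  assumes "finite A" "\<And>t. t \<in> A \<Longrightarrow> f t \<le> B"
  shows "sum f A \<le> real (card {t\<in>A. f t > 0}) * B"
proof -
  have "sum f A = sum f {t\<in>A. f t > 0} + sum f {t\<in>A. \<not> f t > 0}"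
    using sum.Int_Diff[OF assms(1), of f "{t. f t > 0}"] by (simp add: Int_def set_diff_eq)
  also have "sum f {t\<in>A. \<not> f t > 0} \<le> 0"
    by (rule sum_nonpos) simp
  also have "sum f {t\<in>A. f t > 0} \<le> (\<Sum>t\<in>{t\<in>A. f t > 0}. B)"
    using assms(2) by (intro sum_mono) simp
  finally show ?thesis by simp
qed

lemma no_money_pump_if_no_imitation_cycle:
  fixes \<pi> :: "'a::finite \<Rightarrow> 'a \<Rightarrow> real"
  assumes "\<nexists>p. imitation_cycle \<pi> p"
  shows "no_money_pump \<pi>"
proof -
  define B where "B = Max (range (case_prod (rel_payoff \<pi>)))"
  have B: "rel_payoff \<pi> x y \<le> B" for x y
    unfolding B_def by (rule Max_ge) (auto intro: rev_image_eqI[of "(x, y)"])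
  then have "0 \<le> B"
    by (metis diff_self rel_payoff_def)
  define M where "M = real CARD('a \<times> 'a) * B"
  have bounded: "(\<Sum>t\<le>T. rel_payoff \<pi> (xs t) (imitate \<pi> y0 xs t)) \<le> M" for y0 xs T
  proof -
    let ?switches = "{t\<in>{..T}. rel_payoff \<pi> (xs t) (imitate \<pi> y0 xs t) > 0}"
    have "inj_on (\<lambda>t. (xs t, imitate \<pi> y0 xs t)) ?switches"
      using inj_on_switch_profiles[OF assms] by (rule inj_on_subset) auto
    then have "card ?switches = card ((\<lambda>t. (xs t, imitate \<pi> y0 xs t)) ` ?switches)"
      by (rule card_image[symmetric])
    also have "\<dots> \<le> CARD('a \<times> 'a)"
      by (rule card_mono) simp_all
    finally have card: "card ?switches \<le> CARD('a \<times> 'a)" .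
    have "(\<Sum>t\<le>T. rel_payoff \<pi> (xs t) (imitate \<pi> y0 xs t)) \<le> real (card ?switches) * B"
      by (rule sum_le_card_positive_mult_bound) (simp_all add: B)
    also have "\<dots> \<le> M"
      unfolding M_def by (rule mult_right_mono[OF of_nat_mono[OF card] \<open>0 \<le> B\<close>])
    finally show ?thesis .
  qed
  show ?thesis
    unfolding no_money_pump_def
  proof (intro exI[of _ M] conjI allI)
    show "0 \<le> M"
      unfolding M_def using \<open>0 \<le> B\<close> by simp
    fix y0 xs
    show "limsup (\<lambda>T. ereal (\<Sum>t\<le>T. rel_payoff \<pi> (xs t) (imitate \<pi> y0 xs t))) \<le> ereal M"
      by (rule Limsup_bounded) (simp add: bounded)
  qed
qed

theorem lemma2:
  fixes \<pi> :: "'a::finite \<Rightarrow> 'a \<Rightarrow> real"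
  shows "money_pump \<pi> \<longleftrightarrow> (\<exists>p. imitation_cycle \<pi> p)"
  using money_pump_if_imitation_cycle no_money_pump_if_no_imitation_cycle
  unfolding money_pump_def by blast

end
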